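(* Let $(\mathcal A,\mathcal T,(-))$ be a meta-tangible $\mathcal T$-group module triple, with identity $\mathbb 1$, and put $e=\mathbb 1(-)\mathbb 1$, $e'=e+\mathbb 1$. Then one of the following holds: (i) $(\mathcal A,\mathcal T,(-))$ is $(-)$-bipotent; (ii) $e'=\mathbb 1$, and moreover either (a) $(-)$ is of the first kind and $\mathcal A$ has characteristic $2$ (i.e. $\mathbf 3=\mathbb 1$), in which case $\mathcal A$ has height at most $2$; or (b) $(-)$ is of the second kind, and either $\mathcal A$ has finite (positive) characteristic or the elements $\mathbf m$ and $(-)\mathbf m$, $m\in\mathbb N$, are pairwise distinct.
   Context: $(\mathcal A,+,\mathbb 0)$ commutative monoid, $\mathcal T\subseteq\mathcal A\setminus\{\mathbb 0\}$. A negation map is $(-):\mathcal A\to\mathcal A$ with $(-)(b_1+b_2)=(-)b_1+(-)b_2$, $(-)((-)b)=b$, $(-)\mathbb 0=\mathbb 0$, $(-)\mathcal T\subseteq\mathcal T$. Write $b(-)c:=b+((-)c)$, $b^\circ:=b(-)b$, $\mathcal A^\circ=\{b^\circ:b\in\mathcal A\}$. A $\mathcal T$-triple $(\mathcal A,\mathcal T,(-))$: such data with an action $\mathcal T\times\mathcal A\to\mathcal A$ satisfying $a(b_1+b_2)=ab_1+ab_2$, $a\mathbb 0=\mathbb 0$, $(-)(ab)=((-)a)b=a((-)b)$, with $\mathcal T\cap\mathcal A^\circ=\emptyset$ and every element of $\mathcal A$ a finite sum of elements of $\mathcal T$. It is a $\mathcal T$-group module triple if moreover $\mathcal T$ is a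 group with identity $\mathbb 1$ whose multiplication is the restriction of the action, $\mathbb 1b=b$ and $(a_1a_2)b=a_1(a_2b)$. Meta-tangible: $a+b\in\mathcal T$ for all $a,b\in\mathcal T$ with $b\neq(-)a$. $(-)$-bipotent: $a+b\in\{a,b\}$ for all $a,b\in\mathcal T$ with $b\neq(-)a$. $(-)$ is of the first kind if $(-)a=a$ for all $a\in\mathcal T$, of the second kind if $(-)a\neq a$ for all $a\in\mathcal T$. $\mathbf m:=\mathbb 1+\cdots+\mathbb 1$ ($m$ summands). $\mathcal A$ has characteristic $k\ge1$ if $k$ is minimal with $(k+1)b=b$ for all $b\in\mathcal A$ (here $nb$ is the $n$-fold sum), and characteristic $0$ if no such $k$ exists. Height of $c$: least $t$ with $c=\sum_{i=1}^ta_i$, $a_i\in\mathcal T$; height of $\mathcal A$: supremum over its elements. *)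

theory Defs
  imports "HOL-Algebra.Group"
begin

text \<open>The ambient commutative monoid (A,+,0) is the type 'a :: comm_monoid_add (A = UNIV).
  T :: 'a set is the set of tangible elements, neg the negation map (-),
  act the action T x A -> A (only its values for a \<in> T matter), one the identity of T.\<close>

definition negation_map :: "'a::comm_monoid_add set \<Rightarrow> ('a \<Rightarrow> 'a) \<Rightarrow> bool" where
  "negation_map T neg \<longleftrightarrow>
     (\<forall>b1 b2. neg (b1 + b2) = neg b1 + neg b2) \<and>
     (\<forall>b. neg (neg b) = b) \<and> neg 0 = 0 \<and> neg ` T \<subseteq> T"

definition circ :: "('a::comm_monoid_add \<Rightarrow> 'a) \<Rightarrow> 'a \<Rightarrow> 'a" where
  "circ neg b = b + neg b"

definition T_triple :: "'a::comm_monoid_add set \<Rightarrow> ('a \<Rightarrow> 'a) \<Rightarrow> ('a \<Rightarrow> 'a \<Rightarrow> 'a) \<Rightarrow> bool" where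
  "T_triple T neg act \<longleftrightarrow>
     T \<subseteq> UNIV - {0} \<and> negation_map T neg \<and>
     (\<forall>a\<in>T. \<forall>b1 b2. act a (b1 + b2) = act a b1 + act a b2) \<and>
     (\<forall>a\<in>T. act a 0 = 0) \<and>
     (\<forall>a\<in>T. \<forall>b. neg (act a b) = act (neg a) b \<and> neg (act a b) = act a (neg b)) \<and>
     T \<inter> range (circ neg) = {} \<and>
     (\<forall>b. \<exists>xs. set xs \<subseteq> T \<and> b = sum_list xs)"

definition T_group_module_triple ::
  "'a::comm_monoid_add set \<Rightarrow> ('a \<Rightarrow> 'a) \<Rightarrow> ('a \<Rightarrow> 'a \<Rightarrow> 'a) \<Rightarrow> 'a \<Rightarrow> bool" where
  "T_group_module_triple T neg act u \<longleftrightarrow>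
     T_triple T neg act \<and>
     group \<lparr>carrier = T, mult = act, one = u\<rparr> \<and>
     (\<forall>b. act u b = b) \<and>
     (\<forall>a1\<in>T. \<forall>a2\<in>T. \<forall>b. act (act a1 a2) b = act a1 (act a2 b))"

definition meta_tangible :: "'a::comm_monoid_add set \<Rightarrow> ('a \<Rightarrow> 'a) \<Rightarrow> bool" where
  "meta_tangible T neg \<longleftrightarrow> (\<forall>a\<in>T. \<forall>b\<in>T. b \<noteq> neg a \<longrightarrow> a + b \<in> T)"

definition neg_bipotent :: "'a::comm_monoid_add set \<Rightarrow> ('a \<Rightarrow> 'a) \<Rightarrow> bool" where
  "neg_bipotent T neg \<longleftrightarrow> (\<forall>a\<in>T. \<forall>b\<in>T. b \<noteq> neg a \<longrightarrow> a + b \<in> {a, b})"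

definition first_kind :: "'a set \<Rightarrow> ('a \<Rightarrow> 'a) \<Rightarrow> bool" where
  "first_kind T neg \<longleftrightarrow> (\<forall>a\<in>T. neg a = a)"

definition second_kind :: "'a set \<Rightarrow> ('a \<Rightarrow> 'a) \<Rightarrow> bool" where
  "second_kind T neg \<longleftrightarrow> (\<forall>a\<in>T. neg a \<noteq> a)"

text \<open>n-fold sum n b = b + ... + b (n summands); the element m of the paper is nsum m one.\<close>
definition nsum :: "nat \<Rightarrow> 'a::comm_monoid_add \<Rightarrow> 'a" where
  "nsum n b = sum_list (replicate n b)"

definition has_characteristic :: "'a::comm_monoid_add itself \<Rightarrow> nat \<Rightarrow> bool" where
  "has_characteristic _ k \<longleftrightarrow>
     (if k = 0 then (\<forall>j\<ge>1. \<not> (\<forall>b::'a. nsum (j + 1) b = b))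
      else (\<forall>b::'a. nsum (k + 1) b = b) \<and> (\<forall>j. 1 \<le> j \<and> j < k \<longrightarrow> \<not> (\<forall>b::'a. nsum (j + 1) b = b)))"

definition elt_height :: "'a::comm_monoid_add set \<Rightarrow> 'a \<Rightarrow> nat" where
  "elt_height T c = (LEAST t. \<exists>xs. length xs = t \<and> set xs \<subseteq> T \<and> sum_list xs = c)"

end

theory Submission
  imports Defs
begin

text \<open>If \<open>a + b\<close> is neither \<open>a\<close> nor \<open>b\<close>, meta-tangibility forces \<open>(a + b) (-) a = b\<close> and
  \<open>(a + b) (-) b = a\<close>, since otherwise subtracting the remaining summand would produce the
  quasi-zero \<open>(a + b)\<^sup>\<circ>\<close> as a tangible element. Hence \<open>a + a (-) a = a\<close>, and multiplying by
  \<open>a\<^sup>-\<^sup>1\<close> gives \<open>e' = \<one>\<close>. This relation makes \<open>e\<close> idempotent and gives \<open>(\<^bold>m + \<one>) (-) \<one> = \<^bold>m\<close>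
  for \<open>m \<ge> 1\<close>, so any coincidence \<open>\<^bold>m = \<^bold>n\<close> or \<open>\<^bold>m = (-)\<^bold>n\<close> yields a relation
  \<open>\<^bold>k + \<one> = \<one>\<close>, which transfers to all of \<open>\<A>\<close> through the action. In the first kind
  \<open>\<^bold>3 = e' = \<one>\<close>, and a sum of three tangibles always collapses to at most two.\<close>

lemma nsum_0 [simp]: "nsum 0 b = 0"
  by (simp add: nsum_def)

lemma nsum_Suc: "nsum (Suc n) b = b + nsum n b"
  by (simp add: nsum_def)

lemma nsum_zero [simp]: "nsum n 0 = 0"
  by (induction n) (simp_all add: nsum_Suc)

lemma nsum_add: "nsum (m + n) b = nsum m b + nsum n b"
  by (simp add: nsum_def replicate_add)

lemma nsum_add_distrib: "nsum n (x + y) = nsum n x + nsum n y"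
  by (induction n) (simp_all add: nsum_Suc add_ac)

lemma nsum_sum_list: "nsum n (sum_list xs) = sum_list (map (nsum n) xs)"
  by (induction xs) (simp_all add: nsum_add_distrib)

lemma nsum_hom:
  assumes "\<And>x y. f (x + y) = f x + f y" and "f 0 = 0"
  shows "f (nsum n b) = nsum n (f b)"
  by (induction n) (simp_all add: nsum_Suc assms)

subsection \<open>Consequences of the relation \<open>u + u + v = u\<close>\<close>

lemma nsum_Suc_add_cancel:
  assumes "u + u + v = u" and "q \<ge> 1"
  shows "nsum (Suc q) u + v = nsum q u"
proof -
  obtain r where q: "q = Suc r"
    using \<open>q \<ge> 1\<close> by (cases q) auto
  have "nsum (Suc q) u + v = nsum r u + (u + u + v)"
    by (simp add: q nsum_Suc add_ac)
  also have "\<dots> = nsum r u + u"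
    by (simp only: assms(1))
  also have "\<dots> = nsum q u"
    by (simp add: q nsum_Suc add.commute)
  finally show ?thesis .
qed

lemma nsum_periodic:
  assumes "u + u + v = u" and "m \<ge> 1" and "nsum m u = nsum (m + p) u"
  shows "nsum (p + 1) u = u"
  using assms(2,3)
proof (induction m rule: dec_induct)
  case base
  then show ?case
    by (simp add: nsum_Suc add.commute)
next
  case (step n)
  then have "nsum (Suc n) u + v = nsum (Suc n + p) u + v"
    by simp
  then have "nsum n u = nsum (n + p) u"
    using nsum_Suc_add_cancel[OF assms(1), of n] nsum_Suc_add_cancel[OF assms(1), of "n + p"] step.hyps
    by simp
  then show ?case
    using step.IH by simp
qed

lemma nsum_idem:
  assumes "u + u + v = u" and "n \<ge> 1"
  shows "nsum n (u + v) = u + v"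
  using assms(2)
proof (induction n rule: dec_induct)
  case base
  then show ?case
    by (simp add: nsum_Suc)
next
  case (step n)
  have "(u + v) + (u + v) = (u + u + v) + v"
    by (simp add: add_ac)
  with step show ?case
    by (simp add: nsum_Suc assms(1))
qed

lemma nsum_eq_nsum_opposite:
  assumes "u + u + v = u" and "m \<ge> 1" and "n \<ge> 1" and "nsum m u = nsum n v"
  shows "nsum (m + n + 1) u = u"
proof -
  have "nsum (m + n) u = nsum n (u + v)"
    by (simp add: nsum_add nsum_add_distrib assms(4) add.commute)
  then have "nsum (m + n) u = u + v"
    using nsum_idem[OF assms(1,2)] nsum_idem[OF assms(1,3)] by simp
  then have "nsum (m + n + 1) u = u + u + v"
    by (simp add: nsum_Suc add.assoc)
  with assms(1) show ?thesis
    by simp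
qed

lemma has_characteristic_exists:
  assumes "k \<ge> 1" and "\<forall>b::'a::comm_monoid_add. nsum (k + 1) b = b"
  shows "\<exists>k\<ge>1. has_characteristic TYPE('a) k"
proof -
  let ?P = "\<lambda>j. j \<ge> 1 \<and> (\<forall>b::'a. nsum (j + 1) b = b)"
  define k' where "k' = (LEAST j. ?P j)"
  have P: "?P k'"
    unfolding k'_def by (rule LeastI[of ?P k]) (use assms in auto)
  moreover have "\<forall>j. 1 \<le> j \<and> j < k' \<longrightarrow> \<not> (\<forall>b::'a. nsum (j + 1) b = b)"
    using not_less_Least[of _ ?P] unfolding k'_def by blast
  ultimately show ?thesis
    unfolding has_characteristic_def by (intro exI[of _ k']) auto
qed

lemma has_characteristic_2I:
  assumes "\<forall>b::'a::comm_monoid_add. nsum 3 b = b" and "\<not> (\<forall>b::'a. nsum 2 b = b)"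
  shows "has_characteristic TYPE('a) 2"
proof -
  have "\<not> (\<forall>b::'a. nsum (j + 1) b = b)" if "1 \<le> j" "j < 2" for j
  proof -
    from that have "j = 1"
      by simp
    with assms(2) show ?thesis
      by (simp add: numeral_2_eq_2)
  qed
  with assms(1) show ?thesis
    unfolding has_characteristic_def by simp
qed

lemma elt_height_le_length:
  assumes "set ws \<subseteq> T" and "sum_list ws = c"
  shows "elt_height T c \<le> length ws"
  unfolding elt_height_def by (rule Least_le) (use assms in blast)

locale tangible_triple =
  fixes T :: "'a::comm_monoid_add set" and neg :: "'a \<Rightarrow> 'a" and act :: "'a \<Rightarrow> 'a \<Rightarrow> 'a"
  assumes T_triple: "T_triple T neg act"
begin

lemma neg_add: "neg (x + y) = neg x + neg y"
  and neg_neg [simp]: "neg (neg x) = x"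
  and neg_zero [simp]: "neg 0 = 0"
  and neg_closed: "a \<in> T \<Longrightarrow> neg a \<in> T"
  using T_triple unfolding T_triple_def negation_map_def by blast+

lemma neg_inject [simp]: "neg x = neg y \<longleftrightarrow> x = y"
  by (metis neg_neg)

lemma act_add: "a \<in> T \<Longrightarrow> act a (x + y) = act a x + act a y"
  and act_zero: "a \<in> T \<Longrightarrow> act a 0 = 0"
  and neg_act: "a \<in> T \<Longrightarrow> neg (act a x) = act a (neg x)"
  and sum_list_tangible: "\<exists>xs. set xs \<subseteq> T \<and> sum_list xs = b"
  using T_triple unfolding T_triple_def by (blast, blast, blast, metis)

lemma add_neg_notin: "x + neg x \<notin> T"
  using T_triple unfolding T_triple_def circ_def by blast

lemma neg_nsum: "neg (nsum n x) = nsum n (neg x)"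
  by (rule nsum_hom) (simp_all add: neg_add)

lemma act_nsum: "a \<in> T \<Longrightarrow> act a (nsum n x) = nsum n (act a x)"
  by (rule nsum_hom) (simp_all add: act_add act_zero)

lemma meta_tangible_add_neg_cancel:
  assumes "meta_tangible T neg" and "a \<in> T" "b \<in> T" "b \<noteq> neg a" "a + b \<noteq> a"
  shows "a + b + neg a = b"
proof (rule ccontr)
  have "a + b \<in> T"
    using assms unfolding meta_tangible_def by blast
  moreover have "neg a \<noteq> neg (a + b)"
    using assms(5) by simp
  ultimately have diff_T: "a + b + neg a \<in> T"
    using assms(1,2) neg_closed unfolding meta_tangible_def by blast
  assume "a + b + neg a \<noteq> b"
  then have "neg b \<noteq> neg (a + b + neg a)"
    by simp
  with diff_T have "a + b + neg a + neg b \<in> T"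
    using assms(1,3) neg_closed unfolding meta_tangible_def by blast
  moreover have "a + b + neg a + neg b = (a + b) + neg (a + b)"
    by (simp add: neg_add add_ac)
  ultimately show False
    using add_neg_notin by simp
qed

lemma exists_add_add_neg_if_not_bipotent:
  assumes "meta_tangible T neg" and "\<not> neg_bipotent T neg"
  obtains a where "a \<in> T" and "a + a + neg a = a"
proof -
  obtain a b where ab: "a \<in> T" "b \<in> T" "b \<noteq> neg a" "a + b \<noteq> a" "a + b \<noteq> b"
    using assms(2) unfolding neg_bipotent_def by blast
  have "a \<noteq> neg b"
    using ab(3) by auto
  then have a: "b + a + neg b = a"
    using meta_tangible_add_neg_cancel[OF assms(1) ab(2,1)] ab(5) by (simp add: add.commute)
  have "a + a + neg a = (b + a + neg b) + a + neg a"
    using a by simp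
  also have "\<dots> = a + (a + b + neg a) + neg b"
    by (simp add: add_ac)
  also have "\<dots> = b + a + neg b"
    using meta_tangible_add_neg_cancel[OF assms(1) ab(1-4)] by (simp add: add_ac)
  also have "\<dots> = a"
    using a .
  finally show ?thesis
    using ab(1) that by blast
qed

lemma sum_three_as_sum_two:
  assumes "meta_tangible T neg" and "first_kind T neg" and "\<forall>b::'a. nsum 3 b = b"
    and "x \<in> T" "y \<in> T" "z \<in> T"
  obtains ws where "set ws \<subseteq> T" "length ws \<le> 2" "sum_list ws = x + (y + z)"
proof -
  have sum_T: "p + q \<in> T" if "p \<in> T" "q \<in> T" "p \<noteq> q" for p q
    using assms(1,2) that unfolding meta_tangible_def first_kind_def by metis
  consider "x \<noteq> y" | "y \<noteq> z" | "x = y" "y = z"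
    by blast
  then show ?thesis
  proof cases
    case 1
    then show ?thesis
      using that[of "[x + y, z]"] sum_T assms(4-6) by (simp add: add_ac)
  next
    case 2
    then show ?thesis
      using that[of "[x, y + z]"] sum_T assms(4-6) by simp
  next
    case 3
    then have "x + (y + z) = x"
      using assms(3)[rule_format, of x] by (simp add: numeral_3_eq_3 nsum_Suc)
    then show ?thesis
      using that[of "[x]"] assms(4) by simp
  qed
qed

lemma elt_height_le_2:
  assumes "meta_tangible T neg" and "first_kind T neg" and "\<forall>b::'a. nsum 3 b = b"
  shows "elt_height T c \<le> 2"
proof -
  have "\<exists>ws. set ws \<subseteq> T \<and> length ws \<le> 2 \<and> sum_list ws = sum_list xs" if "set xs \<subseteq> T" for xs
    using that
  proof (induction xs)
    case Nil
    then show ?case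
      by (intro exI[of _ "[]"]) simp
  next
    case (Cons x xs)
    then obtain ws where ws: "set ws \<subseteq> T" "length ws \<le> 2" "sum_list ws = sum_list xs"
      by auto
    have x: "x \<in> T"
      using Cons.prems by simp
    consider "length ws \<le> 1" | y z where "ws = [y, z]"
      using ws(2) by (cases ws rule: remdups_adj.cases) auto
    then show ?case
    proof cases
      case 1
      then show ?thesis
        using ws x by (intro exI[of _ "x # ws"]) auto
    next
      case 2
      then show ?thesis
        using sum_three_as_sum_two[OF assms x, of y z] ws by auto
    qed
  qed
  then show ?thesis
    using sum_list_tangible[of c] elt_height_le_length by (metis order_trans)
qed

end

locale tangible_group_triple =
  fixes T :: "'a::comm_monoid_add set" and neg :: "'a \<Rightarrow> 'a" and act :: "'a \<Rightarrow> 'a \<Rightarrow> 'a"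
    and one :: 'a
  assumes group_module_triple: "T_group_module_triple T neg act one"
begin

sublocale tangible_triple T neg act
  using group_module_triple by unfold_locales (simp add: T_group_module_triple_def)

abbreviation (input) G where "G \<equiv> \<lparr>carrier = T, mult = act, one = one\<rparr>"

lemma group_T: "group G"
  and act_one [simp]: "act one x = x"
  and act_assoc: "a \<in> T \<Longrightarrow> a' \<in> T \<Longrightarrow> act (act a a') x = act a (act a' x)"
  using group_module_triple unfolding T_group_module_triple_def by blast+

lemma one_closed: "one \<in> T"
  using monoid.one_closed[OF group.is_monoid[OF group_T]] by simp

lemma act_right_one: "a \<in> T \<Longrightarrow> act a one = a"
  using monoid.r_one[OF group.is_monoid[OF group_T]] by simp

lemma left_inverse_exists: "a \<in> T \<Longrightarrow> \<exists>a'\<in>T. act a' a = one"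
  using group.l_inv_ex[OF group_T] by simp

lemma neg_eq_act_neg_one: "a \<in> T \<Longrightarrow> neg a = act a (neg one)"
  using neg_act act_right_one by metis

lemma nsum_eq_self_if_nsum_one:
  fixes b :: 'a
  assumes "nsum n one = one"
  shows "nsum n b = b"
proof -
  obtain xs where xs: "set xs \<subseteq> T" "sum_list xs = b"
    using sum_list_tangible by blast
  have "nsum n x = x" if "x \<in> T" for x
    using act_nsum[OF that, of n one] assms act_right_one[OF that] by simp
  then have "map (nsum n) xs = xs"
    using xs(1) by (induction xs) auto
  then show ?thesis
    using xs(2) nsum_sum_list by metis
qed

lemma one_add_one_add_neg_one:
  assumes "a \<in> T" and "a + a + neg a = a"
  shows "one + one + neg one = one"
proof -
  obtain a' where a': "a' \<in> T" "act a' a = one"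
    using left_inverse_exists[OF assms(1)] by blast
  have "act a' (neg a) = neg one"
    using neg_act[OF a'(1), of a] a'(2) by simp
  then have "one + one + neg one = act a' (a + a + neg a)"
    by (simp add: act_add[OF a'(1)] a'(2))
  also have "\<dots> = one"
    using assms(2) a'(2) by simp
  finally show ?thesis .
qed

lemma first_kind_if_neg_one: "neg one = one \<Longrightarrow> first_kind T neg"
  unfolding first_kind_def using neg_eq_act_neg_one act_right_one by simp

lemma second_kind_if_neg_one: "neg one \<noteq> one \<Longrightarrow> second_kind T neg"
  unfolding second_kind_def
proof (intro ballI notI)
  fix x assume x: "x \<in> T" "neg x = x" and "neg one \<noteq> one"
  obtain x' where x': "x' \<in> T" "act x' x = one"
    using left_inverse_exists[OF x(1)] by blast
  have "act x' (act x (neg one)) = act x' (act x one)"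
    using x neg_eq_act_neg_one act_right_one by simp
  with \<open>neg one \<noteq> one\<close> show False
    using act_assoc[OF x'(1) x(1)] x'(2) by simp
qed

lemma first_kind_case:
  assumes "meta_tangible T neg" and "one + one + neg one = one" and "neg one = one"
  shows "first_kind T neg \<and> has_characteristic TYPE('a) 2 \<and> (\<forall>c. elt_height T c \<le> 2)"
proof -
  have "nsum 3 one = one"
    using assms(2,3) by (simp add: numeral_3_eq_3 nsum_Suc add_ac)
  then have three: "\<forall>b::'a. nsum 3 b = b"
    using nsum_eq_self_if_nsum_one by blast
  have "nsum 2 one \<noteq> one"
    using add_neg_notin[of one] one_closed assms(3) by (auto simp: numeral_2_eq_2 nsum_Suc)
  then have "has_characteristic TYPE('a) 2"
    using has_characteristic_2I three by blast
  moreover have "first_kind T neg"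
    using first_kind_if_neg_one assms(3) .
  ultimately show ?thesis
    using elt_height_le_2 assms(1) three by blast
qed

lemma second_kind_case:
  assumes "one + one + neg one = one" and "neg one \<noteq> one"
  shows "second_kind T neg \<and>
    ((\<exists>k\<ge>1. has_characteristic TYPE('a) k) \<or>
     ((\<forall>m\<ge>1. \<forall>n\<ge>1. m \<noteq> n \<longrightarrow> nsum m one \<noteq> nsum n one \<and> neg (nsum m one) \<noteq> neg (nsum n one)) \<and>
      (\<forall>m\<ge>1. \<forall>n\<ge>1. nsum m one \<noteq> neg (nsum n one))))"
proof -
  have periodic: "\<exists>k\<ge>1. nsum (k + 1) one = one"
    if "m \<ge> 1" "n \<ge> 1" "m \<noteq> n" "nsum m one = nsum n one" for m n
  proof (cases "m < n")
    case True
    then show ?thesis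
      using nsum_periodic[OF assms(1) that(1), of "n - m"] that(4) by (intro exI[of _ "n - m"]) auto
  next
    case False
    then show ?thesis
      using nsum_periodic[OF assms(1) that(2), of "m - n"] that(3,4) by (intro exI[of _ "m - n"]) auto
  qed
  have opposite: "\<exists>k\<ge>1. nsum (k + 1) one = one"
    if "m \<ge> 1" "n \<ge> 1" "nsum m one = neg (nsum n one)" for m n
    using nsum_eq_nsum_opposite[OF assms(1) that(1,2)] that(1,3) neg_nsum
    by (intro exI[of _ "m + n"]) auto
  have "(\<exists>k\<ge>1. nsum (k + 1) one = one) \<or>
     ((\<forall>m\<ge>1. \<forall>n\<ge>1. m \<noteq> n \<longrightarrow> nsum m one \<noteq> nsum n one \<and> neg (nsum m one) \<noteq> neg (nsum n one)) \<and>
      (\<forall>m\<ge>1. \<forall>n\<ge>1. nsum m one \<noteq> neg (nsum n one)))"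
    using periodic opposite by auto
  moreover have "\<exists>k\<ge>1. has_characteristic TYPE('a) k" if "\<exists>k\<ge>1. nsum (k + 1) one = one"
    using that nsum_eq_self_if_nsum_one has_characteristic_exists by blast
  ultimately show ?thesis
    using second_kind_if_neg_one[OF assms(2)] by blast
qed

end

theorem theorem7p21:
  fixes T :: "'a::comm_monoid_add set" and neg :: "'a \<Rightarrow> 'a"
    and act :: "'a \<Rightarrow> 'a \<Rightarrow> 'a" and one :: 'a
  assumes "T_group_module_triple T neg act one"
    and "meta_tangible T neg"
  defines "e \<equiv> one + neg one"
  defines "e' \<equiv> e + one"
  shows "neg_bipotent T neg \<or>
    (e' = one \<and>
      ((first_kind T neg \<and> has_characteristic TYPE('a) 2 \<and> (\<forall>c. elt_height T c \<le> 2)) \<or>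
       (second_kind T neg \<and>
         ((\<exists>k\<ge>1. has_characteristic TYPE('a) k) \<or>
          ((\<forall>m\<ge>1. \<forall>n\<ge>1. m \<noteq> n \<longrightarrow> nsum m one \<noteq> nsum n one \<and> neg (nsum m one) \<noteq> neg (nsum n one)) \<and>
           (\<forall>m\<ge>1. \<forall>n\<ge>1. nsum m one \<noteq> neg (nsum n one)))))))"
proof (cases "neg_bipotent T neg")
  case False
  interpret tangible_group_triple T neg act one
    using assms(1) by unfold_locales
  from False obtain a where "a \<in> T" "a + a + neg a = a"
    using exists_add_add_neg_if_not_bipotent assms(2) by blast
  then have rel: "one + one + neg one = one"
    by (rule one_add_one_add_neg_one)
  then have "e' = one"
    unfolding e'_def e_def by (simp add: add_ac)
  with rel show ?thesis
    using first_kind_case[OF assms(2) rel] second_kind_case[OF rel] by blast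
qed simp

end
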